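(* Let $\mathfrak p=(p_i)_{i\in\mathbb N}$ be a probability distribution supported by $\mathbb N$ and let $D\subseteq\mathbb N$ be nonempty (finite or infinite). If $d\ge 0$ satisfies $\sum_{i\in D}p_i^{d}=1$, then $\dim_H \pi_{\mathfrak p}(D^{\mathbb N})=d$.
   Context: $\mathbb N=\{1,2,3,\dots\}$. A probability distribution $\mathfrak p=(p_i)_{i\in\mathbb N}$ is supported by $\mathbb N$ if $p_i\in(0,1)$ for all $i$ and $\sum_{i=1}^\infty p_i=1$. Set $\widehat{p_1}=0$ and $\widehat{p_n}=\sum_{i=1}^{n-1}p_i$ for $n\ge 2$. For $n\in\mathbb N$ let $T_n:[0,1)\to[0,1)$, $T_n x=p_n x+\widehat{p_n}$. Define $\pi_{\mathfrak p}:\mathbb N^{\mathbb N}\to[0,1)$ by $\pi_{\mathfrak p}((n_j))=\lim_{j\to\infty}T_{n_1}\circ\cdots\circ T_{n_j}(0)=\widehat{p_{n_1}}+\sum_{j=1}^\infty p_{n_1}\cdots p_{n_j}\widehat{p_{n_{j+1}}}$; this is a bijection onto $[0,1)$, and for $x\in[0,1)$ the entries of $\pi_{\mathfrak p}^{-1}(x)$ are called the digits of $x$ with respect to $\mathfrak p$. $\dim_H$ denotes Hausdorff dimension. *)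

theory Defs
  imports "HOL-Analysis.Analysis"
begin

definition delta_cover :: "real \<Rightarrow> real set \<Rightarrow> (nat \<Rightarrow> real set) \<Rightarrow> bool" where
  "delta_cover \<delta> E U \<longleftrightarrow> E \<subseteq> (\<Union>i. U i) \<and> (\<forall>i. bounded (U i) \<and> diameter (U i) \<le> \<delta>)"

definition hausdorff_content :: "real \<Rightarrow> real \<Rightarrow> real set \<Rightarrow> ennreal" where
  "hausdorff_content s \<delta> E =
     (INF U\<in>{U. delta_cover \<delta> E U}. (\<Sum>i. ennreal (diameter (U i) powr s)))"

definition hausdorff_measure :: "real \<Rightarrow> real set \<Rightarrow> ennreal" where
  "hausdorff_measure s E = (SUP \<delta>\<in>{0<..}. hausdorff_content s \<delta> E)"

definition hausdorff_dim :: "real set \<Rightarrow> real" where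
  "hausdorff_dim E = Inf {s. 0 \<le> s \<and> hausdorff_measure s E = 0}"

definition prob_supported_N :: "(nat \<Rightarrow> real) \<Rightarrow> bool" where
  "prob_supported_N p \<longleftrightarrow> (\<forall>i\<ge>1. 0 < p i \<and> p i < 1) \<and> (p has_sum 1) {1..}"

definition phat :: "(nat \<Rightarrow> real) \<Rightarrow> nat \<Rightarrow> real" where
  "phat p n = (\<Sum>i\<in>{1..<n}. p i)"

definition Tmap :: "(nat \<Rightarrow> real) \<Rightarrow> nat \<Rightarrow> real \<Rightarrow> real" where
  "Tmap p n x = p n * x + phat p n"

text \<open>Digit sequences are indexed from 0: omega 0 is n_1.
  Tcomp p \<omega> j = T_{n_1} o ... o T_{n_j}.\<close>
fun Tcomp :: "(nat \<Rightarrow> real) \<Rightarrow> (nat \<Rightarrow> nat) \<Rightarrow> nat \<Rightarrow> real \<Rightarrow> real" where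
  "Tcomp p \<omega> 0 = id"
| "Tcomp p \<omega> (Suc j) = Tcomp p \<omega> j \<circ> Tmap p (\<omega> j)"

definition coding_map :: "(nat \<Rightarrow> real) \<Rightarrow> (nat \<Rightarrow> nat) \<Rightarrow> real" where
  "coding_map p \<omega> = lim (\<lambda>j. Tcomp p \<omega> j 0)"

end

theory Submission
  imports Defs "HOL-Library.Sublist"
begin

text \<open>
  Write \<open>p\<^sub>w\<close> for the product of the probabilities along a finite word \<open>w\<close>; the set of points
  whose expansion starts with \<open>w\<close> is an interval of length \<open>p\<^sub>w\<close>, and \<open>p\<^sub>w \<le> \<rho>\<^bsup>|w|\<^esup>\<close> for some
  \<open>\<rho> < 1\<close>.

  Upper bound: for \<open>s > d\<close>, cover the set by the intervals of the words of length \<open>n\<close> over \<open>D\<close>;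
  their \<open>s\<close>-dimensional sum is at most \<open>\<rho>\<^bsup>n(s-d)\<^esup> \<Sum> p\<^sub>w\<^sup>d \<le> \<rho>\<^bsup>n(s-d)\<^esup> \<rightarrow> 0\<close>.

  Lower bound: for \<open>s < t < d\<close> some finite \<open>F \<subseteq> D\<close> has \<open>\<Sum>\<^sub>i\<^sub>\<in>\<^sub>F p\<^sub>i\<^sup>t \<ge> 1\<close>, so the normalised weights
  \<open>q\<^sub>i\<close> are a probability vector on \<open>F\<close> with \<open>q\<^sub>w \<le> p\<^sub>w\<^sup>t\<close>.  A ball of diameter \<open>l\<close> meets the
  intervals of boundedly many "stop words" (minimal words with \<open>p\<^sub>w \<le> l\<close>), each of \<open>q\<close>-mass at
  most \<open>l\<^sup>t\<close>, and stop words form a prefix code, which has total \<open>q\<close>-mass at least one whenever it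
  covers all of \<open>F\<^sup>\<nat>\<close>.  By compactness of the image of \<open>F\<^sup>\<nat>\<close>, every cover by sets of
  diameter \<open>r\<^sub>i \<le> 1/8\<close> therefore has \<open>\<Sum> r\<^sub>i\<^sup>t\<close> bounded below, and the \<open>s\<close>-dimensional Hausdorff
  measure of the set is positive.
\<close>

abbreviation seqs_over :: "'a set \<Rightarrow> (nat \<Rightarrow> 'a) set" where
  "seqs_over A \<equiv> {\<omega>. \<forall>j. \<omega> j \<in> A}"

definition seq_take :: "(nat \<Rightarrow> 'a) \<Rightarrow> nat \<Rightarrow> 'a list" where
  "seq_take \<omega> n = map \<omega> [0..<n]"

definition seq_drop :: "(nat \<Rightarrow> 'a) \<Rightarrow> nat \<Rightarrow> nat \<Rightarrow> 'a" where
  "seq_drop \<omega> n = (\<lambda>k. \<omega> (k + n))"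

abbreviation word_weight :: "('a \<Rightarrow> 'b::monoid_mult) \<Rightarrow> 'a list \<Rightarrow> 'b" where
  "word_weight q w \<equiv> prod_list (map q w)"

lemma length_seq_take [simp]: "length (seq_take \<omega> n) = n"
  by (simp add: seq_take_def)

lemma seq_take_0 [simp]: "seq_take \<omega> 0 = []"
  by (simp add: seq_take_def)

lemma seq_take_Suc: "seq_take \<omega> (Suc n) = seq_take \<omega> n @ [\<omega> n]"
  by (simp add: seq_take_def)

lemma seq_take_add: "seq_take \<omega> (n + k) = seq_take \<omega> n @ seq_take (seq_drop \<omega> n) k"
  by (induction k) (auto simp: seq_take_def seq_drop_def add.commute)

lemma take_seq_take: "k \<le> n \<Longrightarrow> take k (seq_take \<omega> n) = seq_take \<omega> k"
  by (simp add: seq_take_def take_map)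

lemma set_seq_take: "set (seq_take \<omega> n) = \<omega> ` {..<n}"
  by (auto simp: seq_take_def)

lemma set_seq_take_subset: "\<omega> \<in> seqs_over A \<Longrightarrow> set (seq_take \<omega> n) \<subseteq> A"
  by (auto simp: set_seq_take)

lemma seq_drop_in_seqs_over: "\<omega> \<in> seqs_over A \<Longrightarrow> seq_drop \<omega> n \<in> seqs_over A"
  by (simp add: seq_drop_def)

lemma word_weight_nonneg:
  fixes q :: "'a \<Rightarrow> real"
  shows "(\<And>i. i \<in> set w \<Longrightarrow> 0 \<le> q i) \<Longrightarrow> 0 \<le> word_weight q w"
  by (induction w) auto

lemma word_weight_le_power:
  fixes f :: "'a \<Rightarrow> real"
  shows "(\<And>i. i \<in> set w \<Longrightarrow> 0 \<le> f i \<and> f i \<le> c) \<Longrightarrow> word_weight f w \<le> c ^ length w"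
proof (induction w)
  case (Cons i w)
  have "0 \<le> f i" "f i \<le> c" "word_weight f w \<le> c ^ length w" using Cons by auto
  moreover have "0 \<le> word_weight f w" using Cons.prems by (intro word_weight_nonneg) auto
  ultimately show ?case by (auto intro: mult_mono)
qed simp

lemma sum_word_weight_lists_length:
  fixes q :: "'a \<Rightarrow> 'b::comm_semiring_1"
  assumes "finite F"
  shows "(\<Sum>w\<in>{w. set w \<subseteq> F \<and> length w = n}. word_weight q w) = sum q F ^ n"
proof (induction n)
  case 0
  have "{w. set w \<subseteq> F \<and> length w = 0} = {[]}" by auto
  thus ?case by simp
next
  case (Suc n)
  let ?L = "{w. set w \<subseteq> F \<and> length w = n}"
  have "(\<Sum>w\<in>{w. set w \<subseteq> F \<and> length w = Suc n}. word_weight q w)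
        = (\<Sum>w\<in>(\<lambda>(w, i). i # w) ` (?L \<times> F). word_weight q w)"
    by (simp only: lists_length_Suc_eq)
  also have "\<dots> = (\<Sum>(w, i)\<in>?L \<times> F. word_weight q w * q i)"
    by (subst sum.reindex) (auto simp: inj_on_def case_prod_beta mult.commute intro!: sum.cong)
  also have "\<dots> = (\<Sum>w\<in>?L. word_weight q w) * sum q F"
    by (simp add: sum_product sum.cartesian_product)
  finally show ?case using Suc by (simp add: mult.commute)
qed

lemma sum_word_weight_le_one:
  fixes q :: "'a \<Rightarrow> real"
  assumes F: "finite F" "\<And>i. i \<in> F \<Longrightarrow> 0 \<le> q i" "sum q F \<le> 1"
    and W: "W \<subseteq> {w. set w \<subseteq> F \<and> length w = n}"
  shows "(\<Sum>w\<in>W. word_weight q w) \<le> 1"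
proof -
  have fin: "finite {w. set w \<subseteq> F \<and> length w = n}"
    using finite_lists_length_eq[OF F(1)] by simp
  have "(\<Sum>w\<in>W. word_weight q w) \<le> (\<Sum>w\<in>{w. set w \<subseteq> F \<and> length w = n}. word_weight q w)"
    by (intro sum_mono2[OF fin W] word_weight_nonneg) (use F(2) in blast)
  also have "\<dots> = sum q F ^ n" by (rule sum_word_weight_lists_length[OF F(1)])
  also have "\<dots> \<le> 1" using F(2,3) by (intro power_le_one sum_nonneg) auto
  finally show ?thesis .
qed

lemma sum_word_weight_extensions:
  fixes q :: "'a \<Rightarrow> real"
  assumes F: "finite F" "sum q F = 1" and w: "set w \<subseteq> F" "length w \<le> N"
  shows "(\<Sum>v\<in>{v. set v \<subseteq> F \<and> length v = N \<and> prefix w v}. word_weight q v) = word_weight q w"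
proof -
  let ?L = "\<lambda>n. {v. set v \<subseteq> F \<and> length v = n}"
  have "{v. set v \<subseteq> F \<and> length v = N \<and> prefix w v} = (\<lambda>u. w @ u) ` ?L (N - length w)"
    using w by (fastforce simp: prefix_def)
  moreover have "(\<Sum>v\<in>(\<lambda>u. w @ u) ` ?L (N - length w). word_weight q v)
      = word_weight q w * (\<Sum>u\<in>?L (N - length w). word_weight q u)"
    by (subst sum.reindex) (auto simp: inj_on_def sum_distrib_left)
  ultimately show ?thesis using sum_word_weight_lists_length[OF F(1), of q "N - length w"] F(2) by simp
qed

text \<open>Extend all words to a common length \<open>N\<close>: every word of length \<open>N\<close> over \<open>F\<close> has a prefix
  in \<open>W\<close>, and the extensions of a word \<open>w\<close> to length \<open>N\<close> have total weight \<open>word_weight q w\<close>.\<close>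
lemma prefix_cover_mass_ge_one:
  fixes q :: "'a \<Rightarrow> real"
  assumes F: "finite F" "F \<noteq> {}" "\<And>i. i \<in> F \<Longrightarrow> 0 \<le> q i" "sum q F = 1"
    and W: "finite W" "\<And>w. w \<in> W \<Longrightarrow> set w \<subseteq> F"
    and cover: "\<And>\<omega>. \<omega> \<in> seqs_over F \<Longrightarrow> \<exists>n. seq_take \<omega> n \<in> W"
  shows "1 \<le> (\<Sum>w\<in>W. word_weight q w)"
proof -
  obtain i0 where i0: "i0 \<in> F" using F(2) by auto
  define N where "N = Max (length ` W)"
  have len_le: "length w \<le> N" if "w \<in> W" for w using W(1) that by (auto simp: N_def)
  let ?L = "{v. set v \<subseteq> F \<and> length v = N}"
  have finL: "finite ?L" using finite_lists_length_eq[OF F(1)] by simp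
  have Q_nonneg: "0 \<le> word_weight q v" if "v \<in> ?L" for v
    using that by (intro word_weight_nonneg) (use F(3) in blast)
  have has_prefix: "\<exists>w\<in>W. prefix w v" if v: "v \<in> ?L" for v
  proof -
    define \<omega> where "\<omega> k = (if k < N then v ! k else i0)" for k
    have "\<omega> \<in> seqs_over F" using v i0 by (auto simp: \<omega>_def)
    then obtain n where n: "seq_take \<omega> n \<in> W" using cover by blast
    have "seq_take \<omega> n = take n v"
      using v len_le[OF n] by (intro nth_equalityI) (auto simp: seq_take_def \<omega>_def)
    thus ?thesis using n by (metis take_is_prefix)
  qed
  have "1 = (\<Sum>v\<in>?L. word_weight q v)" using sum_word_weight_lists_length[OF F(1), of q N] F(4) by simp
  also have "\<dots> \<le> (\<Sum>v\<in>?L. \<Sum>w\<in>W. if prefix w v then word_weight q v else 0)"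
  proof (rule sum_mono)
    fix v assume v: "v \<in> ?L"
    then obtain w where w: "w \<in> W" "prefix w v" using has_prefix by blast
    have "word_weight q v = (if prefix w v then word_weight q v else 0)" using w by simp
    also have "\<dots> \<le> (\<Sum>w\<in>W. if prefix w v then word_weight q v else 0)"
      using Q_nonneg[OF v] by (intro member_le_sum w W(1)) auto
    finally show "word_weight q v \<le> \<dots>" .
  qed
  also have "\<dots> = (\<Sum>w\<in>W. \<Sum>v\<in>{v\<in>?L. prefix w v}. word_weight q v)"
    by (subst sum.swap) (simp only: sum.inter_filter[OF finL])
  also have "\<dots> = (\<Sum>w\<in>W. word_weight q w)"
    using sum_word_weight_extensions[OF F(1,4) W(2) len_le] by (intro sum.cong) (auto simp: conj_assoc)
  finally show ?thesis .
qed

lemma sum_UN_le: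
  fixes f :: "'a \<Rightarrow> real"
  assumes "finite I" "\<And>i. i \<in> I \<Longrightarrow> finite (A i)" "\<And>x. x \<in> (\<Union>i\<in>I. A i) \<Longrightarrow> 0 \<le> f x"
  shows "sum f (\<Union>i\<in>I. A i) \<le> (\<Sum>i\<in>I. sum f (A i))"
  using assms
proof (induction I rule: finite_induct)
  case (insert j I)
  have "sum f (\<Union>i\<in>insert j I. A i) \<le> sum f (A j) + sum f (\<Union>i\<in>I. A i)"
    using insert.hyps insert.prems by (subst UN_insert, subst sum_Un) (auto intro!: sum_nonneg)
  also have "\<dots> \<le> sum f (A j) + (\<Sum>i\<in>I. sum f (A i))" using insert by simp
  finally show ?case using insert by simp
qed simp

lemma card_le_separated:
  fixes A :: "real set"
  assumes A: "finite A" "\<And>a. a \<in> A \<Longrightarrow> lo < a \<and> a < lo + L"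
    and sep: "\<And>a b. a \<in> A \<Longrightarrow> b \<in> A \<Longrightarrow> a \<noteq> b \<Longrightarrow> g \<le> \<bar>a - b\<bar>" and g: "0 < g"
  shows "card A \<le> nat \<lfloor>L / g\<rfloor> + 1"
proof -
  define f where "f a = nat \<lfloor>(a - lo) / g\<rfloor>" for a
  have inj: "inj_on f A"
  proof (rule inj_onI, rule ccontr)
    fix a b assume ab: "a \<in> A" "b \<in> A" "f a = f b" "a \<noteq> b"
    have "0 \<le> \<lfloor>(a - lo) / g\<rfloor>" "0 \<le> \<lfloor>(b - lo) / g\<rfloor>"
      using A(2)[OF ab(1)] A(2)[OF ab(2)] g by auto
    hence "\<lfloor>(a - lo) / g\<rfloor> = \<lfloor>(b - lo) / g\<rfloor>" using ab(3) by (simp add: f_def eq_nat_nat_iff)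
    hence "\<bar>(a - lo) / g - (b - lo) / g\<bar> < 1" by linarith
    hence "\<bar>a - b\<bar> < g" using g by (simp add: diff_divide_distrib[symmetric] abs_divide)
    thus False using sep[OF ab(1,2,4)] by simp
  qed
  have "f ` A \<subseteq> {0..nat \<lfloor>L / g\<rfloor>}"
  proof
    fix y assume "y \<in> f ` A"
    then obtain a where a: "a \<in> A" "y = f a" by auto
    have "(a - lo) / g \<le> L / g" using A(2)[OF a(1)] g by (intro divide_right_mono) auto
    thus "y \<in> {0..nat \<lfloor>L / g\<rfloor>}" using a by (auto simp: f_def nat_mono floor_mono)
  qed
  hence "card (f ` A) \<le> card {0..nat \<lfloor>L / g\<rfloor>}" by (intro card_mono) auto
  thus ?thesis using card_image[OF inj] by simp
qed

lemma powr_add_le_two_powr: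
  fixes a b t :: real
  assumes "0 \<le> a" "0 \<le> b" "0 \<le> t"
  shows "(a + b) powr t \<le> 2 powr t * (a powr t + b powr t)"
proof -
  have "(a + b) powr t \<le> (2 * max a b) powr t" using assms by (intro powr_mono2) auto
  also have "\<dots> = 2 powr t * max a b powr t" using assms by (simp add: powr_mult)
  also have "max a b powr t \<le> a powr t + b powr t" by (simp add: max_def)
  finally show ?thesis by simp
qed

lemma sum_half_powers_le:
  fixes c :: real
  assumes "finite I" "0 \<le> c"
  shows "(\<Sum>i\<in>I. c * (1/2) ^ Suc i) \<le> c"
proof -
  have sums: "(\<lambda>i. c * (1/2) ^ Suc i) sums (c * 1)" by (rule sums_mult[OF power_half_series])
  have "(\<Sum>i\<in>I. c * (1/2) ^ Suc i) \<le> (\<Sum>i. c * (1/2) ^ Suc i)"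
    using assms by (intro sum_le_suminf[OF sums_summable[OF sums] assms(1)]) simp
  thus ?thesis using sums_unique[OF sums] by simp
qed

lemma exists_powr_slack:
  fixes t \<epsilon> c :: real
  assumes "0 < t" "0 < \<epsilon>" "0 < c" "\<epsilon> \<le> c powr t"
  shows "\<exists>e::nat \<Rightarrow> real. (\<forall>i. 0 < e i \<and> e i < c) \<and> (\<forall>I. finite I \<longrightarrow> (\<Sum>i\<in>I. e i powr t) \<le> \<epsilon>)"
proof -
  define a where "a i = \<epsilon> * (1/2) ^ Suc i" for i
  have a: "0 < a i" "a i < \<epsilon>" for i
  proof -
    have "(1/2::real) ^ Suc i < 1" by (rule power_Suc_less_one) auto
    from mult_strict_left_mono[OF this \<open>0 < \<epsilon>\<close>] show "a i < \<epsilon>" by (simp add: a_def)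
    show "0 < a i" using \<open>0 < \<epsilon>\<close> by (simp add: a_def)
  qed
  have "a i powr (1/t) < (c powr t) powr (1/t)" for i
    using a[of i] assms by (intro powr_less_mono2) auto
  hence "a i powr (1/t) < c" for i using assms by (simp add: powr_powr)
  moreover have "0 < a i powr (1/t)" for i using a(1)[of i] by simp
  moreover have "(\<Sum>i\<in>I. (a i powr (1/t)) powr t) \<le> \<epsilon>" if "finite I" for I
    using sum_half_powers_le[OF that, of \<epsilon>] a(1) assms(1,2) by (simp add: a_def powr_powr)
  ultimately show ?thesis by (intro exI[of _ "\<lambda>i. a i powr (1/t)"]) simp
qed

lemma compact_finite_ball_cover:
  fixes K :: "'a::metric_space set"
  assumes "compact K" "K \<subseteq> (\<Union>i. U i)" "\<And>i. bounded (U i)" "\<And>i. 0 < e i"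
  obtains x I where "finite I" "K \<subseteq> (\<Union>i\<in>I. ball (x i) (diameter (U i) + e i))"
proof -
  define x where "x i = (SOME y. y \<in> U i)" for i
  have U_ball: "U i \<subseteq> ball (x i) (diameter (U i) + e i)" for i
  proof
    fix y assume y: "y \<in> U i"
    hence "x i \<in> U i" unfolding x_def by (rule someI)
    hence "dist (x i) y \<le> diameter (U i)" by (rule diameter_bounded_bound[OF assms(3) _ y])
    hence "dist (x i) y < e i + diameter (U i)" by (rule add_strict_increasing[OF assms(4)])
    thus "y \<in> ball (x i) (diameter (U i) + e i)" by (simp add: add.commute)
  qed
  have "(\<Union>i. U i) \<subseteq> (\<Union>i\<in>UNIV. ball (x i) (diameter (U i) + e i))"
    by (rule UN_mono[OF subset_refl U_ball])
  with assms(2) have "K \<subseteq> (\<Union>i\<in>UNIV. ball (x i) (diameter (U i) + e i))" by (rule order_trans)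
  then obtain I where "I \<subseteq> UNIV" "finite I" "K \<subseteq> (\<Union>i\<in>I. ball (x i) (diameter (U i) + e i))"
    by (rule compactE_image[OF assms(1), rotated]) auto
  thus ?thesis by (intro that) simp_all
qed

lemma word_weight_powr: "word_weight f w powr r = word_weight (\<lambda>i. f i powr r) w"
  for f :: "'a \<Rightarrow> real"
  by (induction w) (auto simp: powr_mult)

lemma hausdorff_content_mono:
  "K \<subseteq> E \<Longrightarrow> hausdorff_content s \<delta> K \<le> hausdorff_content s \<delta> E"
  unfolding hausdorff_content_def delta_cover_def by (rule INF_superset_mono) auto

lemma hausdorff_content_antimono_exponent:
  assumes "s \<le> t" "\<delta> \<le> 1"
  shows "hausdorff_content t \<delta> E \<le> hausdorff_content s \<delta> E"
  unfolding hausdorff_content_def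
proof (rule INF_mono)
  fix U assume U: "U \<in> {U. delta_cover \<delta> E U}"
  have "diameter (U i) powr t \<le> diameter (U i) powr s" for i
  proof -
    have "bounded (U i)" "diameter (U i) \<le> \<delta>" using U by (auto simp: delta_cover_def)
    thus ?thesis using assms diameter_ge_0[of "U i"] by (intro powr_mono') auto
  qed
  thus "\<exists>U'\<in>{U. delta_cover \<delta> E U}.
          (\<Sum>i. ennreal (diameter (U' i) powr t)) \<le> (\<Sum>i. ennreal (diameter (U i) powr s))"
    using U by (intro bexI[OF _ U] suminf_le summableI ennreal_leI)
qed

lemma hausdorff_content_le_hausdorff_measure:
  "0 < \<delta> \<Longrightarrow> hausdorff_content s \<delta> E \<le> hausdorff_measure s E"
  unfolding hausdorff_measure_def by (rule SUP_upper) simp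

lemma hausdorff_content_le_cover:
  "delta_cover \<delta> E U \<Longrightarrow> hausdorff_content s \<delta> E \<le> (\<Sum>i. ennreal (diameter (U i) powr s))"
  unfolding hausdorff_content_def by (rule INF_lower) simp

lemma hausdorff_content_le_countable_cover:
  fixes C :: "'a::countable \<Rightarrow> real set"
  assumes "0 \<le> \<delta>" and cover: "E \<subseteq> (\<Union>w\<in>W. C w)"
    and C: "\<And>w. w \<in> W \<Longrightarrow> bounded (C w) \<and> diameter (C w) \<le> \<delta>"
    and sums: "\<And>W'. finite W' \<Longrightarrow> W' \<subseteq> W \<Longrightarrow> (\<Sum>w\<in>W'. diameter (C w) powr s) \<le> B"
  shows "hausdorff_content s \<delta> E \<le> ennreal B"
proof -
  define U where "U k = (if k \<in> to_nat ` W then C (from_nat k) else {})" for k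
  have U_to_nat: "U (to_nat w) = C w" if "w \<in> W" for w using that by (simp add: U_def)
  have "delta_cover \<delta> E U"
    unfolding delta_cover_def
  proof (intro conjI allI)
    show "E \<subseteq> (\<Union>k. U k)" using cover U_to_nat by fastforce
    show "bounded (U k)" "diameter (U k) \<le> \<delta>" for k using C \<open>0 \<le> \<delta>\<close> by (auto simp: U_def)
  qed
  moreover have "(\<Sum>k<N. ennreal (diameter (U k) powr s)) \<le> ennreal B" for N
  proof -
    define W' where "W' = {w\<in>W. to_nat w < N}"
    have "finite W'"
      unfolding W'_def by (rule finite_subset[OF _ finite_vimageI[OF finite_lessThan inj_to_nat]]) auto
    have "(\<Sum>k<N. diameter (U k) powr s) = (\<Sum>k\<in>to_nat ` W'. diameter (U k) powr s)"
      by (rule sum.mono_neutral_right) (auto simp: U_def W'_def)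
    also have "\<dots> = (\<Sum>w\<in>W'. diameter (C w) powr s)"
      by (subst sum.reindex[OF inj_on_subset[OF inj_to_nat]]) (auto simp: W'_def U_to_nat)
    also have "\<dots> \<le> B" using sums \<open>finite W'\<close> by (auto simp: W'_def)
    finally show ?thesis by (subst sum_ennreal) (auto intro: ennreal_leI)
  qed
  hence "(\<Sum>k. ennreal (diameter (U k) powr s)) \<le> ennreal B" by (intro suminf_le_const summableI)
  ultimately show ?thesis using hausdorff_content_le_cover order_trans by blast
qed

lemma hausdorff_dim_eqI:
  assumes "0 \<le> d"
    and above: "\<And>s. d < s \<Longrightarrow> hausdorff_measure s E = 0"
    and below: "\<And>s. 0 \<le> s \<Longrightarrow> s < d \<Longrightarrow> hausdorff_measure s E \<noteq> 0"
  shows "hausdorff_dim E = d"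
proof -
  let ?S = "{s. 0 \<le> s \<and> hausdorff_measure s E = 0}"
  have in_S: "d + e \<in> ?S" if "0 < e" for e using that assms(1) above by simp
  have bdd: "bdd_below ?S" by (rule bdd_belowI[of _ 0]) auto
  have "d \<le> Inf ?S"
    using in_S[of 1] below by (intro cInf_greatest) (auto simp: not_less[symmetric])
  moreover have "Inf ?S \<le> d + e" if "0 < e" for e by (rule cInf_lower[OF in_S[OF that] bdd])
  ultimately show ?thesis unfolding hausdorff_dim_def by (meson antisym field_le_epsilon)
qed

section \<open>Cylinder intervals and the coding map\<close>

fun word_map :: "(nat \<Rightarrow> real) \<Rightarrow> nat list \<Rightarrow> real \<Rightarrow> real" where
  "word_map p [] = id"
| "word_map p (i # w) = Tmap p i \<circ> word_map p w"

definition cylinder :: "(nat \<Rightarrow> real) \<Rightarrow> nat list \<Rightarrow> real set" where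
  "cylinder p w = word_map p w ` {0..<1}"

lemma word_map_affine: "word_map p w x = word_map p w 0 + word_weight p w * x"
proof (induction w arbitrary: x)
  case (Cons i w)
  show ?case using Cons.IH[of x] by (simp add: Tmap_def algebra_simps)
qed simp

lemma word_map_append: "word_map p (u @ v) = word_map p u \<circ> word_map p v"
  by (induction u) auto

lemma Tcomp_eq_word_map: "Tcomp p \<omega> n = word_map p (seq_take \<omega> n)"
  by (induction n) (simp_all add: seq_take_Suc word_map_append)

lemma Tcomp_Suc_0:
  "Tcomp p \<omega> (Suc n) 0 = Tcomp p \<omega> n 0 + word_weight p (seq_take \<omega> n) * phat p (\<omega> n)"
  by (simp add: Tcomp_eq_word_map seq_take_Suc word_map_append Tmap_def
      word_map_affine[of p "seq_take \<omega> n" "phat p (\<omega> n)"])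

lemma cylinder_append: "cylinder p (u @ v) = word_map p u ` cylinder p v"
  by (simp add: cylinder_def word_map_append image_comp)

lemma continuous_on_coordinate:
  fixes f :: "nat \<Rightarrow> 'a::topological_space"
  shows "continuous_on UNIV (\<lambda>\<omega>::nat \<Rightarrow> nat. f (\<omega> n))"
proof -
  have "continuous_on UNIV (f \<circ> (\<lambda>\<omega>::nat \<Rightarrow> nat. \<omega> n))"
    by (rule continuous_on_compose[OF continuous_on_product_coordinates]) simp
  thus ?thesis by (simp add: o_def)
qed

lemma continuous_on_word_weight_seq_take:
  fixes p :: "nat \<Rightarrow> real"
  shows "continuous_on UNIV (\<lambda>\<omega>::nat \<Rightarrow> nat. word_weight p (seq_take \<omega> n))"
proof (induction n)
  case (Suc n)
  have "continuous_on UNIV (\<lambda>\<omega>::nat \<Rightarrow> nat. word_weight p (seq_take \<omega> n) * p (\<omega> n))"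
    by (intro continuous_on_mult Suc.IH continuous_on_coordinate)
  thus ?case by (simp add: seq_take_Suc)
qed simp

lemma continuous_on_Tcomp_0: "continuous_on UNIV (\<lambda>\<omega>::nat \<Rightarrow> nat. Tcomp p \<omega> n 0)"
proof (induction n)
  case (Suc n)
  show ?case unfolding Tcomp_Suc_0
    by (intro continuous_on_add continuous_on_mult Suc.IH continuous_on_word_weight_seq_take
        continuous_on_coordinate)
qed simp

locale digit_expansion =
  fixes p :: "nat \<Rightarrow> real"
  assumes prob_supported: "prob_supported_N p"
begin

lemma p_pos [simp]: "1 \<le> i \<Longrightarrow> 0 < p i" and p_less_1: "1 \<le> i \<Longrightarrow> p i < 1"
  using prob_supported by (auto simp: prob_supported_N_def)

lemma p_nonneg [simp]: "1 \<le> i \<Longrightarrow> 0 \<le> p i"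
  using p_pos less_imp_le by blast

lemma finite_sum_p_le_1:
  assumes "finite B" "B \<subseteq> {1..}" shows "sum p B \<le> 1"
proof -
  have "(p has_sum 1) {1..}" using prob_supported by (simp add: prob_supported_N_def)
  thus ?thesis using assms by (rule finite_sum_le_has_sum) auto
qed

lemma phat_nonneg: "0 \<le> phat p n"
  unfolding phat_def by (intro sum_nonneg) simp

lemma phat_add_p_less_1:
  assumes "1 \<le> n" shows "phat p n + p n < 1"
proof -
  have "phat p n + p n + p (Suc n) = sum p {1..<Suc (Suc n)}"
    using assms by (simp add: phat_def)
  also have "\<dots> \<le> 1" by (rule finite_sum_p_le_1) auto
  finally have "phat p n + p n + p (Suc n) \<le> 1" .
  moreover have "0 < p (Suc n)" by simp
  ultimately show ?thesis by linarith
qed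

lemma phat_add_p_le_phat:
  assumes "1 \<le> i" "i < j" shows "phat p i + p i \<le> phat p j"
proof -
  have "phat p j = sum p {1..<Suc i} + sum p {Suc i..<j}"
    unfolding phat_def using assms by (subst sum.atLeastLessThan_concat) auto
  moreover have "sum p {1..<Suc i} = phat p i + p i" using assms by (simp add: phat_def)
  moreover have "0 \<le> sum p {Suc i..<j}" by (intro sum_nonneg) simp
  ultimately show ?thesis by linarith
qed

definition \<rho> :: real where "\<rho> = max (p 1) (1 - p 1)"

lemma rho_pos: "0 < \<rho>" and rho_less_1: "\<rho> < 1"
  using p_pos[of 1] p_less_1[of 1] by (auto simp: \<rho>_def)

lemma p_le_rho: assumes "1 \<le> i" shows "p i \<le> \<rho>"
proof (cases "i = 1")
  case False
  hence "p 1 + p i \<le> 1" using finite_sum_p_le_1[of "{1, i}"] assms by simp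
  thus ?thesis by (simp add: \<rho>_def)
qed (simp add: \<rho>_def)

lemma rho_power_tendsto_0: "(\<lambda>n. \<rho> ^ n) \<longlonglongrightarrow> 0"
  using rho_pos rho_less_1 by (intro LIMSEQ_realpow_zero) auto

lemma word_weight_pos: "set w \<subseteq> {1..} \<Longrightarrow> 0 < word_weight p w"
  by (induction w) (auto intro!: mult_pos_pos p_pos)

lemma word_weight_le_rho_power:
  assumes "set w \<subseteq> {1..}" shows "word_weight p w \<le> \<rho> ^ length w"
proof (rule word_weight_le_power)
  fix i assume "i \<in> set w"
  hence "1 \<le> i" using assms by auto
  thus "0 \<le> p i \<and> p i \<le> \<rho>" by (simp add: p_le_rho)
qed

lemma word_map_0_bounds:
  "set w \<subseteq> {1..} \<Longrightarrow> 0 \<le> word_map p w 0 \<and> word_map p w 0 + word_weight p w \<le> 1"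
proof (induction w)
  case (Cons i w)
  hence i: "1 \<le> i" and IH: "0 \<le> word_map p w 0" "word_map p w 0 + word_weight p w \<le> 1" by auto
  have "p i * (word_map p w 0 + word_weight p w) \<le> p i"
    using IH p_pos[OF i] by (simp add: mult_le_cancel_left1)
  thus ?case using IH p_pos[OF i] phat_nonneg phat_add_p_less_1[OF i]
    by (simp add: Tmap_def algebra_simps)
qed simp

lemma cylinder_eq:
  assumes "set w \<subseteq> {1..}"
  shows "cylinder p w = {word_map p w 0 ..< word_map p w 0 + word_weight p w}"
proof -
  let ?a = "word_map p w 0" and ?r = "word_weight p w"
  have r: "0 < ?r" by (rule word_weight_pos[OF assms])
  have "cylinder p w = (\<lambda>x. ?a + ?r * x) ` {0..<1}"
    unfolding cylinder_def by (rule image_cong[OF refl], rule word_map_affine)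
  also have "\<dots> = {?a ..< ?a + ?r}"
  proof safe
    fix y assume "y \<in> {?a ..< ?a + ?r}"
    hence "(y - ?a) / ?r \<in> {0..<1}" "y = ?a + ?r * ((y - ?a) / ?r)"
      using r by (auto simp: field_simps)
    thus "y \<in> (\<lambda>x. ?a + ?r * x) ` {0..<1}" by blast
  qed (use r in auto)
  finally show ?thesis .
qed

lemma cylinder_subset_unit: "set w \<subseteq> {1..} \<Longrightarrow> cylinder p w \<subseteq> {0..<1}"
  using word_map_0_bounds[of w] by (auto simp: cylinder_eq)

lemma cylinder_append_subset:
  assumes "set (u @ v) \<subseteq> {1..}" shows "cylinder p (u @ v) \<subseteq> cylinder p u"
proof -
  have "cylinder p (u @ v) = word_map p u ` cylinder p v" by (rule cylinder_append)
  also have "\<dots> \<subseteq> word_map p u ` {0..<1}" using assms by (intro image_mono cylinder_subset_unit) auto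
  finally show ?thesis by (simp add: cylinder_def)
qed

lemma cylinder_singleton: "1 \<le> i \<Longrightarrow> cylinder p [i] = {phat p i ..< phat p i + p i}"
  by (simp add: cylinder_eq Tmap_def)

lemma inj_word_map: assumes "set w \<subseteq> {1..}" shows "inj (word_map p w)"
proof (rule injI)
  fix x y assume "word_map p w x = word_map p w y"
  thus "x = y" using word_weight_pos[OF assms] word_map_affine[of p w x] word_map_affine[of p w y] by simp
qed

lemma cylinders_disjoint:
  assumes "set u \<subseteq> {1..}" "set v \<subseteq> {1..}" "u \<parallel> v"
  shows "cylinder p u \<inter> cylinder p v = {}"
proof -
  obtain c i u' j v' where uv: "i \<noteq> j" "u = c @ i # u'" "v = c @ j # v'"
    using parallel_decomp[OF assms(3)] by blast
  have ij: "1 \<le> i" "1 \<le> j" and c: "set c \<subseteq> {1..}" using assms uv by auto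
  have "cylinder p [i] \<inter> cylinder p [j] = {}"
  proof (cases "i < j")
    case True thus ?thesis using phat_add_p_le_phat[of i j] ij by (auto simp: cylinder_singleton)
  next
    case False thus ?thesis using phat_add_p_le_phat[of j i] ij uv(1) by (auto simp: cylinder_singleton)
  qed
  hence "cylinder p (c @ [i]) \<inter> cylinder p (c @ [j]) = {}"
    using inj_word_map[OF c] by (simp add: cylinder_append image_Int[symmetric])
  moreover have "cylinder p u \<subseteq> cylinder p (c @ [i])"
    using cylinder_append_subset[of "c @ [i]" u'] assms(1) uv(2) by simp
  moreover have "cylinder p v \<subseteq> cylinder p (c @ [j])"
    using cylinder_append_subset[of "c @ [j]" v'] assms(2) uv(3) by simp
  ultimately show ?thesis by (metis Int_mono subset_empty)
qed

lemma Tcomp_0_bounds: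
  assumes "\<omega> \<in> seqs_over {1..}"
  shows "0 \<le> Tcomp p \<omega> n 0" "Tcomp p \<omega> n 0 \<le> 1"
proof -
  have w: "set (seq_take \<omega> n) \<subseteq> {1..}" by (rule set_seq_take_subset[OF assms])
  show "0 \<le> Tcomp p \<omega> n 0" "Tcomp p \<omega> n 0 \<le> 1"
    using word_map_0_bounds[OF w] word_weight_pos[OF w] by (simp_all add: Tcomp_eq_word_map)
qed

lemma Tcomp_tendsto_coding_map:
  assumes "\<omega> \<in> seqs_over {1..}"
  shows "(\<lambda>n. Tcomp p \<omega> n 0) \<longlonglongrightarrow> coding_map p \<omega>"
proof -
  have "incseq (\<lambda>n. Tcomp p \<omega> n 0)"
  proof (rule incseq_SucI)
    fix n
    have "0 < word_weight p (seq_take \<omega> n)" by (rule word_weight_pos[OF set_seq_take_subset[OF assms]])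
    thus "Tcomp p \<omega> n 0 \<le> Tcomp p \<omega> (Suc n) 0"
      using phat_nonneg[of "\<omega> n"] by (simp only: Tcomp_Suc_0) simp
  qed
  hence "convergent (\<lambda>n. Tcomp p \<omega> n 0)"
    using Tcomp_0_bounds[OF assms]
    by (intro Bseq_monoseq_convergent incseq_imp_monoseq BseqI'[where K=1]) auto
  thus ?thesis by (simp add: coding_map_def convergent_LIMSEQ_iff)
qed

lemma coding_map_bounds:
  assumes "\<omega> \<in> seqs_over {1..}"
  shows "0 \<le> coding_map p \<omega>" "coding_map p \<omega> \<le> 1"
  using Tcomp_0_bounds[OF assms]
  by (intro LIMSEQ_le_const[OF Tcomp_tendsto_coding_map[OF assms]]
      LIMSEQ_le_const2[OF Tcomp_tendsto_coding_map[OF assms]]; simp)+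

lemma coding_map_shift:
  assumes "\<omega> \<in> seqs_over {1..}"
  shows "coding_map p \<omega> = word_map p (seq_take \<omega> n) (coding_map p (seq_drop \<omega> n))"
proof -
  let ?a = "word_map p (seq_take \<omega> n) 0" and ?r = "word_weight p (seq_take \<omega> n)"
  have "Tcomp p \<omega> (n + k) 0 = ?a + ?r * Tcomp p (seq_drop \<omega> n) k 0" for k
    by (simp add: Tcomp_eq_word_map seq_take_add word_map_append
        word_map_affine[of p "seq_take \<omega> n" "word_map p (seq_take (seq_drop \<omega> n) k) 0"])
  hence "(\<lambda>k. Tcomp p \<omega> (n + k) 0) \<longlonglongrightarrow> ?a + ?r * coding_map p (seq_drop \<omega> n)"
    using assms by (simp only:) (intro tendsto_intros Tcomp_tendsto_coding_map seq_drop_in_seqs_over)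
  moreover have "(\<lambda>k. Tcomp p \<omega> (n + k) 0) \<longlonglongrightarrow> coding_map p \<omega>"
    using LIMSEQ_ignore_initial_segment[OF Tcomp_tendsto_coding_map[OF assms], of n] by (simp add: add.commute)
  ultimately have "?a + ?r * coding_map p (seq_drop \<omega> n) = coding_map p \<omega>" by (rule LIMSEQ_unique)
  thus ?thesis by (subst word_map_affine) simp
qed

lemma coding_map_less_1:
  assumes "\<omega> \<in> seqs_over {1..}"
  shows "coding_map p \<omega> < 1"
proof -
  have "coding_map p \<omega> = phat p (\<omega> 0) + p (\<omega> 0) * coding_map p (seq_drop \<omega> 1)"
    using coding_map_shift[OF assms, of 1] by (simp add: seq_take_def Tmap_def)
  also have "\<dots> \<le> phat p (\<omega> 0) + p (\<omega> 0)"
    using coding_map_bounds(2)[OF seq_drop_in_seqs_over[OF assms]] p_pos[of "\<omega> 0"] assms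
    by (simp add: mult_le_cancel_left1)
  also have "\<dots> < 1" using phat_add_p_less_1 assms by simp
  finally show ?thesis .
qed

lemma coding_map_in_cylinder:
  assumes "\<omega> \<in> seqs_over {1..}"
  shows "coding_map p \<omega> \<in> cylinder p (seq_take \<omega> n)"
  unfolding cylinder_def coding_map_shift[OF assms, of n]
  using coding_map_bounds(1) coding_map_less_1 seq_drop_in_seqs_over[OF assms] by auto

lemma dist_Tcomp_coding_map_le:
  assumes "\<omega> \<in> seqs_over {1..}"
  shows "dist (Tcomp p \<omega> n 0) (coding_map p \<omega>) \<le> \<rho> ^ n"
proof -
  have w: "set (seq_take \<omega> n) \<subseteq> {1..}" by (rule set_seq_take_subset[OF assms])
  have "coding_map p \<omega> - Tcomp p \<omega> n 0 = word_weight p (seq_take \<omega> n) * coding_map p (seq_drop \<omega> n)"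
    using coding_map_shift[OF assms, of n]
    by (simp add: Tcomp_eq_word_map word_map_affine[of p "seq_take \<omega> n" "coding_map p (seq_drop \<omega> n)"])
  hence "dist (Tcomp p \<omega> n 0) (coding_map p \<omega>) = word_weight p (seq_take \<omega> n) * coding_map p (seq_drop \<omega> n)"
    using word_weight_pos[OF w] coding_map_bounds(1)[OF seq_drop_in_seqs_over[OF assms]]
    by (simp add: dist_real_def abs_minus_commute)
  also have "\<dots> \<le> word_weight p (seq_take \<omega> n)"
    using word_weight_pos[OF w] coding_map_bounds(2)[OF seq_drop_in_seqs_over[OF assms]] by (simp add: mult_left_le)
  also have "\<dots> \<le> \<rho> ^ n" using word_weight_le_rho_power[OF w] by simp
  finally show ?thesis .
qed

lemma continuous_on_coding_map: "continuous_on (seqs_over {1..}) (coding_map p)"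
proof (rule uniform_limit_theorem[where f="\<lambda>n \<omega>. Tcomp p \<omega> n 0" and F=sequentially])
  show "\<forall>\<^sub>F n in sequentially. continuous_on (seqs_over {1..}) (\<lambda>\<omega>. Tcomp p \<omega> n 0)"
    by (intro always_eventually allI continuous_on_subset[OF continuous_on_Tcomp_0]) simp
  show "uniform_limit (seqs_over {1..}) (\<lambda>n \<omega>. Tcomp p \<omega> n 0) (coding_map p) sequentially"
  proof (rule uniform_limitI)
    fix e :: real assume "0 < e"
    with rho_power_tendsto_0 have "\<forall>\<^sub>F n in sequentially. \<rho> ^ n < e" by (rule order_tendstoD)
    thus "\<forall>\<^sub>F n in sequentially. \<forall>\<omega>\<in>seqs_over {1..}. dist (Tcomp p \<omega> n 0) (coding_map p \<omega>) < e"
      by (rule eventually_mono) (use dist_Tcomp_coding_map_le le_less_trans in blast)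
  qed
qed simp

lemma compact_coding_map_image:
  assumes "finite F" "F \<subseteq> {1..}"
  shows "compact (coding_map p ` seqs_over F)"
proof (rule compact_continuous_image)
  have "seqs_over F = PiE UNIV (\<lambda>_. F)" by (auto simp: PiE_UNIV_domain Pi_iff)
  moreover have "compactin (product_topology (\<lambda>_. euclidean) UNIV) (PiE UNIV (\<lambda>_::nat. F))"
    using assms(1) by (auto simp: compactin_PiE compactin_euclidean_iff intro: finite_imp_compact)
  ultimately show "compact (seqs_over F)" by (simp add: euclidean_product_topology compactin_euclidean_iff)
  show "continuous_on (seqs_over F) (coding_map p)"
    using assms(2) by (intro continuous_on_subset[OF continuous_on_coding_map]) auto
qed


section \<open>Upper bound\<close>

lemma word_weight_powr_le:
  assumes w: "set w \<subseteq> {1..}" and "d \<le> s"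
  shows "word_weight p w powr s \<le> (\<rho> powr (s - d)) ^ length w * word_weight (\<lambda>i. p i powr d) w"
proof -
  have "word_weight (\<lambda>i. p i powr (s - d)) w \<le> (\<rho> powr (s - d)) ^ length w"
  proof (rule word_weight_le_power)
    fix i assume "i \<in> set w"
    hence "1 \<le> i" using w by auto
    thus "0 \<le> p i powr (s - d) \<and> p i powr (s - d) \<le> \<rho> powr (s - d)"
      using \<open>d \<le> s\<close> by (simp add: powr_mono2 p_le_rho)
  qed
  hence "word_weight p w powr (s - d) * word_weight p w powr d
      \<le> (\<rho> powr (s - d)) ^ length w * word_weight p w powr d"
    unfolding word_weight_powr by (rule mult_right_mono) (auto intro: word_weight_nonneg)
  moreover have "word_weight p w powr s = word_weight p w powr (s - d) * word_weight p w powr d"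
    by (simp add: powr_add[symmetric])
  ultimately show ?thesis by (simp only: word_weight_powr)
qed

lemma sum_word_weight_powr_le:
  assumes D: "D \<subseteq> {1..}" and sums: "\<And>B. finite B \<Longrightarrow> B \<subseteq> D \<Longrightarrow> (\<Sum>i\<in>B. p i powr d) \<le> 1"
    and "d \<le> s" and W: "finite W" "W \<subseteq> {w. set w \<subseteq> D \<and> length w = n}"
  shows "(\<Sum>w\<in>W. word_weight p w powr s) \<le> (\<rho> powr (s - d)) ^ n"
proof -
  have "(\<Sum>w\<in>W. word_weight p w powr s) \<le> (\<Sum>w\<in>W. (\<rho> powr (s - d)) ^ n * word_weight (\<lambda>i. p i powr d) w)"
    using W(2) D word_weight_powr_le[OF _ \<open>d \<le> s\<close>] by (intro sum_mono) fastforce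
  also have "\<dots> \<le> (\<rho> powr (s - d)) ^ n"
    unfolding sum_distrib_left[symmetric]
  proof (rule mult_left_le)
    show "(\<Sum>w\<in>W. word_weight (\<lambda>i. p i powr d) w) \<le> 1"
    proof (rule sum_word_weight_le_one)
      show "finite (\<Union>w\<in>W. set w)" using W(1) by simp
      show "sum (\<lambda>i. p i powr d) (\<Union>w\<in>W. set w) \<le> 1" using W by (intro sums) auto
      show "W \<subseteq> {w. set w \<subseteq> (\<Union>w\<in>W. set w) \<and> length w = n}" using W(2) by auto
    qed simp
  qed simp
  finally show ?thesis .
qed

text \<open>Cover by the closed cylinder intervals of all words of length \<open>n\<close> over \<open>D\<close>.\<close>
lemma hausdorff_content_le_level_cover:
  assumes D: "D \<subseteq> {1..}" and sums: "\<And>B. finite B \<Longrightarrow> B \<subseteq> D \<Longrightarrow> (\<Sum>i\<in>B. p i powr d) \<le> 1"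
    and "d \<le> s" "\<rho> ^ n \<le> \<delta>"
  shows "hausdorff_content s \<delta> (coding_map p ` seqs_over D) \<le> ennreal ((\<rho> powr (s - d)) ^ n)"
proof -
  define W where "W = {w. set w \<subseteq> D \<and> length w = n}"
  define C where "C w = {word_map p w 0 .. word_map p w 0 + word_weight p w}" for w
  have wD: "set w \<subseteq> {1..}" if "w \<in> W" for w using that D by (auto simp: W_def)
  have diam: "diameter (C w) = word_weight p w" if "w \<in> W" for w
    using word_weight_pos[OF wD[OF that]] by (simp add: C_def diameter_closed_interval)
  show ?thesis
  proof (rule hausdorff_content_le_countable_cover[where C = C and W = W])
    show "0 \<le> \<delta>" using assms(4) rho_pos by (meson order_trans zero_le_power less_imp_le)
    show "coding_map p ` seqs_over D \<subseteq> (\<Union>w\<in>W. C w)"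
    proof (rule image_subsetI)
      fix \<omega> assume "\<omega> \<in> seqs_over D"
      hence \<omega>: "\<omega> \<in> seqs_over {1..}" and w: "seq_take \<omega> n \<in> W"
        using D by (auto simp: W_def set_seq_take)
      have "coding_map p \<omega> \<in> C (seq_take \<omega> n)"
        using coding_map_in_cylinder[OF \<omega>, of n] cylinder_eq[OF wD[OF w]] by (auto simp: C_def)
      thus "coding_map p \<omega> \<in> (\<Union>w\<in>W. C w)" using w by blast
    qed
    show "bounded (C w) \<and> diameter (C w) \<le> \<delta>" if "w \<in> W" for w
      using diam[OF that] word_weight_le_rho_power[OF wD[OF that]] assms(4) that
      by (auto simp: C_def W_def)
    show "(\<Sum>w\<in>W'. diameter (C w) powr s) \<le> (\<rho> powr (s - d)) ^ n" if W': "finite W'" "W' \<subseteq> W" for W'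
    proof -
      have "(\<Sum>w\<in>W'. diameter (C w) powr s) = (\<Sum>w\<in>W'. word_weight p w powr s)"
        using W'(2) diam by (intro sum.cong) auto
      also have "\<dots> \<le> (\<rho> powr (s - d)) ^ n"
        using sum_word_weight_powr_le[OF D sums \<open>d \<le> s\<close> W'(1)] W'(2) by (simp add: W_def)
      finally show ?thesis .
    qed
  qed
qed

lemma hausdorff_content_eq_0_above:
  assumes D: "D \<subseteq> {1..}" and sums: "\<And>B. finite B \<Longrightarrow> B \<subseteq> D \<Longrightarrow> (\<Sum>i\<in>B. p i powr d) \<le> 1"
    and "d < s" "0 < \<delta>"
  shows "hausdorff_content s \<delta> (coding_map p ` seqs_over D) = 0"
proof -
  define K where "K = \<rho> powr (s - d)"
  have "K < 1 powr (s - d)" unfolding K_def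
    using assms(3) rho_pos rho_less_1 by (intro powr_less_mono2) auto
  hence K: "(\<lambda>n. K ^ n) \<longlonglongrightarrow> 0" by (intro LIMSEQ_realpow_zero) (auto simp: K_def)
  have bound: "hausdorff_content s \<delta> (coding_map p ` seqs_over D) \<le> ennreal e" if "0 < e" for e
  proof -
    have "\<forall>\<^sub>F n in sequentially. \<rho> ^ n < \<delta> \<and> K ^ n < e"
      using order_tendstoD(2)[OF rho_power_tendsto_0 assms(4)] order_tendstoD(2)[OF K that]
      by (rule eventually_conj)
    then obtain n where n: "\<rho> ^ n < \<delta>" "K ^ n < e" by (auto simp: eventually_sequentially)
    have "hausdorff_content s \<delta> (coding_map p ` seqs_over D) \<le> ennreal (K ^ n)"
      unfolding K_def using n(1) assms(3) by (intro hausdorff_content_le_level_cover[OF D sums]) auto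
    also have "\<dots> \<le> ennreal e" using n(2) by (intro ennreal_leI) simp
    finally show ?thesis .
  qed
  have "hausdorff_content s \<delta> (coding_map p ` seqs_over D) \<le> 0"
  proof (rule ennreal_le_epsilon)
    fix e :: real assume "0 < e"
    thus "hausdorff_content s \<delta> (coding_map p ` seqs_over D) \<le> 0 + ennreal e" using bound by simp
  qed
  thus ?thesis by simp
qed


section \<open>Stop words\<close>

lemma exists_rho_power_le:
  assumes "0 < l" shows "\<exists>n. \<rho> ^ n \<le> l"
proof -
  obtain N where "\<forall>n\<ge>N. \<rho> ^ n < l"
    using order_tendstoD(2)[OF rho_power_tendsto_0 assms] by (auto simp: eventually_sequentially)
  thus ?thesis by (meson less_imp_le order.refl)
qed

definition stop_time :: "real \<Rightarrow> (nat \<Rightarrow> nat) \<Rightarrow> nat" where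
  "stop_time l \<omega> = (LEAST n. word_weight p (seq_take \<omega> n) \<le> l)"

abbreviation stop_word :: "real \<Rightarrow> (nat \<Rightarrow> nat) \<Rightarrow> nat list" where
  "stop_word l \<omega> \<equiv> seq_take \<omega> (stop_time l \<omega>)"

lemma word_weight_seq_take_le:
  assumes "\<omega> \<in> seqs_over {1..}" "\<rho> ^ n \<le> l"
  shows "word_weight p (seq_take \<omega> n) \<le> l"
  using word_weight_le_rho_power[OF set_seq_take_subset[OF assms(1)], of n] assms(2) by simp

lemma stop_time_le: "\<omega> \<in> seqs_over {1..} \<Longrightarrow> \<rho> ^ n \<le> l \<Longrightarrow> stop_time l \<omega> \<le> n"
  unfolding stop_time_def by (rule Least_le) (rule word_weight_seq_take_le)

lemma stop_word_weight_le:
  assumes "\<omega> \<in> seqs_over {1..}" "0 < l"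
  shows "word_weight p (stop_word l \<omega>) \<le> l"
proof -
  obtain n where "\<rho> ^ n \<le> l" using exists_rho_power_le[OF assms(2)] by blast
  thus ?thesis unfolding stop_time_def by (rule LeastI[OF word_weight_seq_take_le[OF assms(1)]])
qed

lemma word_weight_gt_before_stop_time: "k < stop_time l \<omega> \<Longrightarrow> l < word_weight p (seq_take \<omega> k)"
  unfolding stop_time_def using not_less_Least by force

lemma stop_word_weight_gt:
  assumes \<omega>: "\<omega> \<in> seqs_over {1..}" and l: "0 < l" "l < 1" and m: "\<And>j. m \<le> p (\<omega> j)"
  shows "m * l < word_weight p (stop_word l \<omega>)"
proof -
  have "stop_time l \<omega> \<noteq> 0"
  proof
    assume "stop_time l \<omega> = 0"
    thus False using stop_word_weight_le[OF \<omega> l(1)] l(2) by simp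
  qed
  then obtain k where k: "stop_time l \<omega> = Suc k" using not0_implies_Suc by blast
  have "m * l \<le> p (\<omega> k) * l" using m l by (intro mult_right_mono) auto
  also have "\<dots> < p (\<omega> k) * word_weight p (seq_take \<omega> k)"
    using word_weight_gt_before_stop_time[of k l \<omega>] k \<omega> by simp
  finally show ?thesis by (simp add: k seq_take_Suc mult.commute)
qed

lemma stop_word_prefix_imp_eq:
  assumes \<omega>: "\<omega> \<in> seqs_over {1..}" and "0 < l"
    and pre: "prefix (stop_word l \<omega>) (stop_word l \<omega>')"
  shows "stop_word l \<omega> = stop_word l \<omega>'"
proof -
  let ?k = "stop_time l \<omega>" and ?k' = "stop_time l \<omega>'"
  obtain u where u: "stop_word l \<omega>' = stop_word l \<omega> @ u" using pre by (auto simp: prefix_def)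
  have k: "?k \<le> ?k'" using arg_cong[OF u, of length] by simp
  have "seq_take \<omega>' ?k = stop_word l \<omega>"
    using arg_cong[OF u, of "take ?k"] take_seq_take[OF k, of \<omega>'] by simp
  hence "\<not> ?k < ?k'"
    using word_weight_gt_before_stop_time[of ?k l \<omega>'] stop_word_weight_le[OF \<omega> \<open>0 < l\<close>] by auto
  hence "u = []" using arg_cong[OF u, of length] k by simp
  thus ?thesis using u by simp
qed

lemma stop_word_cylinders_disjoint:
  assumes \<omega>: "\<omega> \<in> seqs_over {1..}" "\<omega>' \<in> seqs_over {1..}" and "0 < l"
    and ne: "stop_word l \<omega> \<noteq> stop_word l \<omega>'"
  shows "cylinder p (stop_word l \<omega>) \<inter> cylinder p (stop_word l \<omega>') = {}"
proof (rule cylinders_disjoint)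
  show "set (stop_word l \<omega>) \<subseteq> {1..}" "set (stop_word l \<omega>') \<subseteq> {1..}"
    using \<omega> by (simp_all add: set_seq_take_subset)
  show "stop_word l \<omega> \<parallel> stop_word l \<omega>'"
    using stop_word_prefix_imp_eq[OF \<omega>(1) \<open>0 < l\<close>, of \<omega>'] stop_word_prefix_imp_eq[OF \<omega>(2) \<open>0 < l\<close>, of \<omega>] ne
    by (auto simp: parallel_def)
qed

end

section \<open>Lower bound: the mass distribution argument\<close>

locale finite_digit_expansion = digit_expansion +
  fixes F :: "nat set" and t :: real
  assumes finite_F: "finite F" and F_digits: "F \<subseteq> {1..}" and t_pos: "0 < t"
    and sum_powr_ge_1: "1 \<le> (\<Sum>i\<in>F. p i powr t)"
begin

lemma F_nonempty: "F \<noteq> {}"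
  using sum_powr_ge_1 by auto

lemma seqs_over_F_digits: "\<omega> \<in> seqs_over F \<Longrightarrow> \<omega> \<in> seqs_over {1..}"
  using F_digits by auto

definition q :: "nat \<Rightarrow> real" where
  "q i = p i powr t / (\<Sum>j\<in>F. p j powr t)"

lemma q_nonneg: "0 \<le> q i"
  using sum_powr_ge_1 by (simp add: q_def)

lemma sum_q: "sum q F = 1"
  using sum_powr_ge_1 by (simp add: q_def sum_divide_distrib[symmetric])

lemma word_weight_q_le: "word_weight q w \<le> word_weight p w powr t"
proof (induction w)
  case (Cons i w)
  have "p i powr t / (\<Sum>j\<in>F. p j powr t) \<le> p i powr t / 1"
    using sum_powr_ge_1 by (intro divide_left_mono) auto
  hence "q i \<le> p i powr t" by (simp add: q_def)
  hence "q i * word_weight q w \<le> p i powr t * word_weight p w powr t"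
    using Cons q_nonneg by (intro mult_mono) (auto intro: word_weight_nonneg)
  thus ?case by (simp add: powr_mult)
qed simp

definition p_min :: real where "p_min = Min (p ` F)"

lemma p_min_le: "i \<in> F \<Longrightarrow> p_min \<le> p i"
  using finite_F by (simp add: p_min_def)

lemma p_min_pos: "0 < p_min"
proof -
  have "p_min \<in> p ` F" unfolding p_min_def using finite_F F_nonempty by (intro Min_in) auto
  thus ?thesis using F_digits by auto
qed

text \<open>A bound on the number of disjoint intervals of length \<open>> p_min * l\<close> whose left endpoints
  lie in an interval of length \<open>2 * l\<close>.\<close>
definition stop_word_bound :: nat where
  "stop_word_bound = nat \<lfloor>2 / p_min\<rfloor> + 1"

definition near_stop_words :: "real \<Rightarrow> real \<Rightarrow> nat list set" where
  "near_stop_words l x = stop_word l ` {\<omega> \<in> seqs_over F. coding_map p \<omega> \<in> ball x (l / 2)}"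

lemma near_stop_word_digits: "w \<in> near_stop_words l x \<Longrightarrow> set w \<subseteq> F"
  by (auto simp: near_stop_words_def set_seq_take)

lemma near_stop_word_weight_le:
  "0 < l \<Longrightarrow> w \<in> near_stop_words l x \<Longrightarrow> word_weight p w \<le> l"
  using stop_word_weight_le[OF seqs_over_F_digits] by (auto simp: near_stop_words_def)

lemma finite_near_stop_words:
  assumes "0 < l" shows "finite (near_stop_words l x)"
proof -
  obtain n where "\<rho> ^ n \<le> l" using exists_rho_power_le[OF assms] by blast
  hence "near_stop_words l x \<subseteq> {w. set w \<subseteq> F \<and> length w \<le> n}"
    using near_stop_word_digits stop_time_le[OF seqs_over_F_digits]
    by (auto simp: near_stop_words_def)
  thus ?thesis by (rule finite_subset) (rule finite_lists_length_le[OF finite_F])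
qed

lemma near_stop_word_cylinder:
  assumes l: "0 < l" "l < 1" and w: "w \<in> near_stop_words l x"
  shows "cylinder p w = {word_map p w 0 ..< word_map p w 0 + word_weight p w}"
    and "p_min * l < word_weight p w"
    and "x - 3 * l / 2 < word_map p w 0" "word_map p w 0 < x + l / 2"
proof -
  obtain \<omega> where \<omega>: "\<omega> \<in> seqs_over F" "dist x (coding_map p \<omega>) < l / 2" "w = stop_word l \<omega>"
    using w by (auto simp: near_stop_words_def)
  have \<omega>1: "\<omega> \<in> seqs_over {1..}" by (rule seqs_over_F_digits[OF \<omega>(1)])
  show cyl: "cylinder p w = {word_map p w 0 ..< word_map p w 0 + word_weight p w}"
    unfolding \<omega>(3) by (rule cylinder_eq[OF set_seq_take_subset[OF \<omega>1]])
  show "p_min * l < word_weight p w"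
    using stop_word_weight_gt[OF \<omega>1 l] p_min_le \<omega>(1,3) by auto
  have "coding_map p \<omega> \<in> cylinder p w" using coding_map_in_cylinder[OF \<omega>1] \<omega>(3) by simp
  hence "word_map p w 0 \<le> coding_map p \<omega>" "coding_map p \<omega> < word_map p w 0 + word_weight p w"
    using cyl by auto
  moreover have "word_weight p w \<le> l" using stop_word_weight_le[OF \<omega>1 l(1)] \<omega>(3) by simp
  moreover have "x - coding_map p \<omega> < l / 2 \<and> coding_map p \<omega> - x < l / 2"
    using \<omega>(2) abs_less_iff[of "x - coding_map p \<omega>" "l / 2"] by (simp add: dist_real_def)
  ultimately show "x - 3 * l / 2 < word_map p w 0" "word_map p w 0 < x + l / 2"
    by linarith+
qed

text \<open>The cylinder of the stop word on the left ends before the left endpoint of the other.\<close>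
lemma near_stop_words_separated:
  assumes l: "0 < l" "l < 1" and w: "w \<in> near_stop_words l x" "v \<in> near_stop_words l x" "w \<noteq> v"
  shows "p_min * l \<le> \<bar>word_map p w 0 - word_map p v 0\<bar>"
proof -
  obtain \<omega> \<omega>' where \<omega>: "\<omega> \<in> seqs_over F" "\<omega>' \<in> seqs_over F"
    and wv: "w = stop_word l \<omega>" "v = stop_word l \<omega>'"
    using w(1,2) unfolding near_stop_words_def by blast
  have disj: "cylinder p w \<inter> cylinder p v = {}"
    unfolding wv using w(3)[unfolded wv]
    by (rule stop_word_cylinders_disjoint[OF seqs_over_F_digits[OF \<omega>(1)] seqs_over_F_digits[OF \<omega>(2)] l(1)])
  have gap: "p_min * l \<le> word_map p v 0 - word_map p w 0"
    if "cylinder p w \<inter> cylinder p v = {}" "w \<in> near_stop_words l x" "v \<in> near_stop_words l x"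
       "word_map p w 0 \<le> word_map p v 0" for w v
  proof -
    have "0 < word_weight p v"
      using near_stop_word_cylinder(2)[OF l that(3)] mult_pos_pos[OF p_min_pos l(1)] by linarith
    hence "word_map p v 0 \<in> cylinder p v" by (simp add: near_stop_word_cylinder(1)[OF l that(3)])
    hence "word_map p v 0 \<notin> cylinder p w" using that(1) by blast
    hence "word_map p w 0 + word_weight p w \<le> word_map p v 0"
      using that(4) by (simp add: near_stop_word_cylinder(1)[OF l that(2)])
    thus ?thesis using near_stop_word_cylinder(2)[OF l that(2)] by simp
  qed
  show ?thesis
  proof (cases "word_map p w 0 \<le> word_map p v 0")
    case True thus ?thesis using gap[OF disj w(1,2)] by simp
  next
    case False
    have "cylinder p v \<inter> cylinder p w = {}" using disj by blast
    thus ?thesis using gap[OF _ w(2,1)] False by simp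
  qed
qed

lemma card_near_stop_words:
  assumes l: "0 < l" "l < 1"
  shows "card (near_stop_words l x) \<le> stop_word_bound"
proof -
  let ?W = "near_stop_words l x" and ?a = "\<lambda>w. word_map p w 0"
  have pos: "0 < p_min * l" using p_min_pos l(1) by simp
  have sep: "p_min * l \<le> \<bar>?a w - ?a v\<bar>" if "w \<in> ?W" "v \<in> ?W" "w \<noteq> v" for w v
    by (rule near_stop_words_separated[OF l that])
  have "inj_on ?a ?W"
  proof (rule inj_onI, rule ccontr)
    fix w v assume wv: "w \<in> ?W" "v \<in> ?W" "?a w = ?a v" "w \<noteq> v"
    have "p_min * l \<le> \<bar>?a w - ?a v\<bar>" by (rule sep[OF wv(1,2,4)])
    thus False using wv(3) pos by simp
  qed
  hence "card ?W = card (?a ` ?W)" by (rule card_image[symmetric])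
  also have "\<dots> \<le> nat \<lfloor>2 * l / (p_min * l)\<rfloor> + 1"
  proof (rule card_le_separated)
    show "finite (?a ` ?W)" using finite_near_stop_words[OF l(1)] by simp
    show "x - 3 * l / 2 < b \<and> b < x - 3 * l / 2 + 2 * l" if b: "b \<in> ?a ` ?W" for b
    proof -
      obtain w where "w \<in> ?W" "b = ?a w" using b by blast
      thus ?thesis using near_stop_word_cylinder(3,4)[OF l \<open>w \<in> ?W\<close>] by linarith
    qed
    show "p_min * l \<le> \<bar>b - c\<bar>" if bc: "b \<in> ?a ` ?W" "c \<in> ?a ` ?W" "b \<noteq> c" for b c
    proof -
      obtain w v where wv: "w \<in> ?W" "v \<in> ?W" "b = ?a w" "c = ?a v" using bc(1,2) by blast
      have "w \<noteq> v" using bc(3) wv(3,4) by metis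
      thus ?thesis using sep[OF wv(1,2)] wv(3,4) by simp
    qed
  qed (rule pos)
  also have "\<dots> = stop_word_bound" using l(1) by (simp add: stop_word_bound_def)
  finally show ?thesis .
qed

lemma near_stop_words_weight_sum_le:
  assumes l: "0 < l" "l < 1"
  shows "(\<Sum>w\<in>near_stop_words l x. word_weight q w) \<le> real stop_word_bound * l powr t"
proof -
  have "(\<Sum>w\<in>near_stop_words l x. word_weight q w) \<le> (\<Sum>w\<in>near_stop_words l x. l powr t)"
  proof (rule sum_mono)
    fix w assume w: "w \<in> near_stop_words l x"
    have "word_weight p w \<le> l" by (rule near_stop_word_weight_le[OF l(1) w])
    moreover have "0 \<le> word_weight p w"
      using near_stop_word_digits[OF w] F_digits by (intro word_weight_nonneg) auto
    ultimately have "word_weight p w powr t \<le> l powr t" using t_pos by (intro powr_mono2) auto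
    thus "word_weight q w \<le> l powr t" using word_weight_q_le[of w] by linarith
  qed
  also have "\<dots> = card (near_stop_words l x) * l powr t" by simp
  also have "\<dots> \<le> real stop_word_bound * l powr t"
    using card_near_stop_words[OF l] by (intro mult_right_mono) auto
  finally show ?thesis .
qed


lemma ball_cover_powr_sum_ge:
  assumes I: "finite I" and cover: "coding_map p ` seqs_over F \<subseteq> (\<Union>i\<in>I. ball (x i) (l i / 2))"
    and l: "\<And>i. i \<in> I \<Longrightarrow> 0 < l i \<and> l i < 1"
  shows "1 \<le> real stop_word_bound * (\<Sum>i\<in>I. l i powr t)"
proof -
  let ?W = "\<lambda>i. near_stop_words (l i) (x i)"
  have fin: "finite (?W i)" if "i \<in> I" for i using l[OF that] by (simp add: finite_near_stop_words)
  have "1 \<le> (\<Sum>w\<in>(\<Union>i\<in>I. ?W i). word_weight q w)"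
  proof (rule prefix_cover_mass_ge_one[OF finite_F F_nonempty _ sum_q])
    show "finite (\<Union>i\<in>I. ?W i)" using I fin by blast
    show "set w \<subseteq> F" if "w \<in> (\<Union>i\<in>I. ?W i)" for w
      using that near_stop_word_digits by blast
    show "\<exists>n. seq_take \<omega> n \<in> (\<Union>i\<in>I. ?W i)" if \<omega>: "\<omega> \<in> seqs_over F" for \<omega>
    proof -
      obtain i where i: "i \<in> I" "coding_map p \<omega> \<in> ball (x i) (l i / 2)" using cover \<omega> by blast
      hence "stop_word (l i) \<omega> \<in> ?W i" using \<omega> unfolding near_stop_words_def by blast
      thus ?thesis using i(1) by blast
    qed
  qed (rule q_nonneg)
  also have "\<dots> \<le> (\<Sum>i\<in>I. \<Sum>w\<in>?W i. word_weight q w)"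
    by (rule sum_UN_le[OF I fin]) (auto intro!: word_weight_nonneg q_nonneg)
  also have "\<dots> \<le> (\<Sum>i\<in>I. real stop_word_bound * l i powr t)"
  proof (rule sum_mono)
    fix i assume "i \<in> I"
    with l show "(\<Sum>w\<in>?W i. word_weight q w) \<le> real stop_word_bound * l i powr t"
      by (simp add: near_stop_words_weight_sum_le)
  qed
  finally show ?thesis by (simp add: sum_distrib_left)
qed

text \<open>Enlarge each set of the cover to an open ball, with a slack \<open>e\<^sub>i\<close> whose \<open>t\<close>-th powers sum to at
  most \<open>\<epsilon>\<close>, and apply compactness of the limit set; diameters \<open>\<le> 1/8\<close> keep the enlarged balls
  of diameter below \<open>1\<close>, as required for stop words.\<close>
lemma delta_cover_powr_sum_ge:
  assumes cover: "delta_cover (1/8) (coding_map p ` seqs_over F) U"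
    and summable: "summable (\<lambda>i. diameter (U i) powr t)"
    and \<epsilon>: "0 < \<epsilon>" "\<epsilon> \<le> (1/2) powr t"
  shows "1 \<le> real stop_word_bound * 2 powr t * (2 powr t * (\<Sum>i. diameter (U i) powr t) + \<epsilon>)"
proof -
  define r where "r i = diameter (U i)" for i
  have bounded: "bounded (U i)" and r: "0 \<le> r i" "r i \<le> 1/8" for i
    using cover diameter_ge_0 by (auto simp: r_def delta_cover_def)
  from exists_powr_slack[OF t_pos \<epsilon>(1) half_gt_zero[OF zero_less_one] \<epsilon>(2)]
  obtain e :: "nat \<Rightarrow> real" where e_bounds: "\<forall>i. 0 < e i \<and> e i < 1/2"
    and e_sum: "\<forall>I. finite I \<longrightarrow> (\<Sum>i\<in>I. e i powr t) \<le> \<epsilon>"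
    by blast
  have e: "0 < e i" "e i < 1/2" for i using e_bounds by simp_all
  have "coding_map p ` seqs_over F \<subseteq> (\<Union>i. U i)" using cover by (simp add: delta_cover_def)
  then obtain x I where "finite I"
    and I: "coding_map p ` seqs_over F \<subseteq> (\<Union>i\<in>I. ball (x i) (diameter (U i) + e i / 2))"
    by (rule compact_finite_ball_cover[OF compact_coding_map_image[OF finite_F F_digits] _ bounded,
          where e = "\<lambda>i. e i / 2"]) (simp add: e(1))
  hence "coding_map p ` seqs_over F \<subseteq> (\<Union>i\<in>I. ball (x i) ((2 * r i + e i) / 2))"
    by (simp add: r_def add_divide_distrib)
  moreover have "0 < 2 * r i + e i \<and> 2 * r i + e i < 1" for i using r[of i] e[of i] by linarith
  ultimately have "1 \<le> real stop_word_bound * (\<Sum>i\<in>I. (2 * r i + e i) powr t)"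
    by (rule ball_cover_powr_sum_ge[OF \<open>finite I\<close>, where l = "\<lambda>i. 2 * r i + e i"])
  also have "(\<Sum>i\<in>I. (2 * r i + e i) powr t) \<le> (\<Sum>i\<in>I. 2 powr t * (2 powr t * r i powr t + e i powr t))"
  proof (rule sum_mono)
    fix i
    have "(2 * r i + e i) powr t \<le> 2 powr t * ((2 * r i) powr t + e i powr t)"
      using r[of i] e(1)[of i] t_pos by (intro powr_add_le_two_powr) auto
    thus "(2 * r i + e i) powr t \<le> 2 powr t * (2 powr t * r i powr t + e i powr t)"
      by (simp add: powr_mult)
  qed
  also have "\<dots> = 2 powr t * (2 powr t * (\<Sum>i\<in>I. r i powr t) + (\<Sum>i\<in>I. e i powr t))"
    by (simp add: sum.distrib sum_distrib_left[symmetric])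
  also have "\<dots> \<le> 2 powr t * (2 powr t * (\<Sum>i. r i powr t) + \<epsilon>)"
  proof -
    have "(\<Sum>i\<in>I. r i powr t) \<le> (\<Sum>i. r i powr t)"
      using summable unfolding r_def by (rule sum_le_suminf[OF _ \<open>finite I\<close>]) simp
    thus ?thesis using e_sum \<open>finite I\<close> by (simp add: add_mono)
  qed
  finally show ?thesis by (simp add: r_def mult.assoc mult_left_mono)
qed

lemma hausdorff_content_limit_set_pos:
  "0 < hausdorff_content t (1/8) (coding_map p ` seqs_over F)"
proof -
  define C where "C = real stop_word_bound * 2 powr t * 2 powr t"
  have C: "0 < C" by (simp add: C_def stop_word_bound_def)
  have "ennreal (1 / C) \<le> (\<Sum>i. ennreal (diameter (U i) powr t))"
    if cover: "delta_cover (1/8) (coding_map p ` seqs_over F) U" for U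
  proof (cases "summable (\<lambda>i. diameter (U i) powr t)")
    case True
    define X where "X = (\<Sum>i. diameter (U i) powr t)"
    have "1 \<le> C * X + e" if "0 < e" for e
    proof -
      define N where "N = real stop_word_bound * 2 powr t"
      define \<epsilon> where "\<epsilon> = min ((1/2) powr t) (e / N)"
      have N: "0 < N" by (simp add: N_def stop_word_bound_def)
      have "1 \<le> N * (2 powr t * X + \<epsilon>)"
        unfolding X_def N_def using that N by (intro delta_cover_powr_sum_ge[OF cover True]) (auto simp: \<epsilon>_def)
      also have "\<dots> = C * X + N * \<epsilon>" by (simp add: C_def N_def algebra_simps)
      also have "N * \<epsilon> \<le> N * (e / N)" using N by (intro mult_left_mono) (auto simp: \<epsilon>_def)
      finally show ?thesis using N by simp
    qed
    hence "1 \<le> C * X" by (rule field_le_epsilon)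
    hence "1 / C \<le> X" using C by (simp add: field_simps)
    moreover have "(\<Sum>i. ennreal (diameter (U i) powr t)) = ennreal X"
      unfolding X_def using True by (rule suminf_ennreal2[rotated]) simp
    ultimately show ?thesis by (simp add: ennreal_leI)
  next
    case False
    have "(\<Sum>i. ennreal (diameter (U i) powr t)) \<noteq> top \<Longrightarrow> summable (\<lambda>i. diameter (U i) powr t)"
      by (rule summable_suminf_not_top) simp
    hence "(\<Sum>i. ennreal (diameter (U i) powr t)) = top" using False by blast
    thus ?thesis by simp
  qed
  hence "ennreal (1 / C) \<le> hausdorff_content t (1/8) (coding_map p ` seqs_over F)"
    unfolding hausdorff_content_def by (rule INF_greatest) simp
  moreover have "0 < ennreal (1 / C)" using C by simp
  ultimately show ?thesis by (rule order.strict_trans2[rotated])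
qed

end

context digit_expansion
begin

lemma exists_finite_subset_powr_sum_ge_1:
  assumes D: "D \<subseteq> {1..}" and sum_D: "((\<lambda>i. p i powr d) has_sum 1) D" and "t < d"
  shows "\<exists>F. finite F \<and> F \<subseteq> D \<and> 1 \<le> (\<Sum>i\<in>F. p i powr t)"
proof -
  define C where "C = \<rho> powr (t - d)"
  have "1 powr (t - d) < C"
    unfolding C_def using rho_pos rho_less_1 \<open>t < d\<close> by (intro powr_less_mono2_neg) auto
  hence C: "1 < C" by simp
  have "\<forall>\<^sub>F B in finite_subsets_at_top D. 1 / C < (\<Sum>i\<in>B. p i powr d)"
    using sum_D C unfolding has_sum_def by (intro order_tendstoD(1)) auto
  then obtain F where F: "finite F" "F \<subseteq> D" "1 / C < (\<Sum>i\<in>F. p i powr d)"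
    unfolding eventually_finite_subsets_at_top by blast
  have "1 < C * (\<Sum>i\<in>F. p i powr d)" using F(3) C by (simp add: field_simps)
  also have "\<dots> \<le> (\<Sum>i\<in>F. p i powr t)"
    unfolding sum_distrib_left
  proof (rule sum_mono)
    fix i assume "i \<in> F"
    hence i: "1 \<le> i" using F(2) D by auto
    have "C \<le> p i powr (t - d)"
      unfolding C_def using p_le_rho[OF i] p_pos[OF i] \<open>t < d\<close> by (intro powr_mono2') auto
    hence "C * p i powr d \<le> p i powr (t - d) * p i powr d" by (rule mult_right_mono) simp
    thus "C * p i powr d \<le> p i powr t" by (simp add: powr_add[symmetric])
  qed
  finally show ?thesis using F(1,2) by auto
qed

lemma hausdorff_measure_eq_0_above:
  assumes D: "D \<subseteq> {1..}" and sum_D: "((\<lambda>i. p i powr d) has_sum 1) D" and "d < s"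
  shows "hausdorff_measure s (coding_map p ` seqs_over D) = 0"
proof -
  have "(\<Sum>i\<in>B. p i powr d) \<le> 1" if "finite B" "B \<subseteq> D" for B
    using finite_sum_le_has_sum[OF sum_D that] by simp
  thus ?thesis
    unfolding hausdorff_measure_def using hausdorff_content_eq_0_above[OF D _ \<open>d < s\<close>] by simp
qed

lemma hausdorff_measure_pos_below:
  assumes D: "D \<subseteq> {1..}" and sum_D: "((\<lambda>i. p i powr d) has_sum 1) D" and s: "0 \<le> s" "s < d"
  shows "hausdorff_measure s (coding_map p ` seqs_over D) \<noteq> 0"
proof -
  let ?E = "coding_map p ` seqs_over D"
  define t where "t = (s + d) / 2"
  have "t < d" using s by (simp add: t_def)
  then obtain F where F: "finite F" "F \<subseteq> D" "1 \<le> (\<Sum>i\<in>F. p i powr t)"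
    using exists_finite_subset_powr_sum_ge_1[OF D sum_D] by blast
  interpret finite_digit_expansion p F t
    by unfold_locales (use F D s in \<open>auto simp: t_def\<close>)
  have "0 < hausdorff_content t (1/8) (coding_map p ` seqs_over F)"
    by (rule hausdorff_content_limit_set_pos)
  also have "\<dots> \<le> hausdorff_content t (1/8) ?E"
    using F(2) by (intro hausdorff_content_mono image_mono) auto
  also have "\<dots> \<le> hausdorff_content s (1/8) ?E"
    using s by (intro hausdorff_content_antimono_exponent) (auto simp: t_def)
  also have "\<dots> \<le> hausdorff_measure s ?E" by (rule hausdorff_content_le_hausdorff_measure) simp
  finally show ?thesis by simp
qed

end

theorem theorem1:
  fixes p :: "nat \<Rightarrow> real" and D :: "nat set" and d :: real
  assumes "prob_supported_N p"
    and "D \<subseteq> {1..}" and "D \<noteq> {}"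
    and "0 \<le> d"
    and "((\<lambda>i. p i powr d) has_sum 1) D"
  shows "hausdorff_dim (coding_map p ` {\<omega>. \<forall>j. \<omega> j \<in> D}) = d"
proof -
  interpret digit_expansion p by unfold_locales (rule assms(1))
  show ?thesis
    using hausdorff_measure_eq_0_above[OF assms(2,5)] hausdorff_measure_pos_below[OF assms(2,5)]
    by (rule hausdorff_dim_eqI[OF assms(4)])
qed

end
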